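(* For every $Q\subset\mathrm{EX}(M)$, the space $Q(M)$ is $T_1$.
   Context: Conventions: $M$ is an $n$-dimensional smooth manifold (Hausdorff, second countable) with maximal $C^\infty$ atlas $\mathcal{A}(M)$; every chart $\alpha$ has open domain $\mathrm{dom}(\alpha)\subset M$ and open range $\mathrm{ran}(\alpha)\subset\mathbb{R}^n$. For $A\subset\mathbb{R}^n$, $\partial A$ is its boundary in $\mathbb{R}^n$; for $A\subset U\subset\mathbb{R}^n$, $\partial_U A$ is the boundary of $A$ relative to $U$. An admissible boundary point of $\alpha$ is a $p\in\partial\,\mathrm{ran}(\alpha)$ such that every sequence $(x_i)\subset\mathrm{dom}(\alpha)$ with $\alpha(x_i)\to p$ has no accumulation point in $M$; $B(\alpha)$ is the set of these. An extension is a pair $(\alpha,U)$, $U\subset\mathbb{R}^n$ open, $\mathrm{ran}(\alpha)\subset U$, $\emptyset\ne\partial_U\mathrm{ran}(\alpha)\subset B(\alpha)$; $\mathrm{EX}(M)$ is the set of extensions. A boundary set is $(\alpha,U,V)$ with $(\alpha,U)\in\mathrm{EX}(M)$, $V\subset B(\alpha)\cap U$ (a boundary point if $V=\{p\}$). $(\alpha,U,V)$ covers $(\beta,X,Y)$ if for every sequence $(y_i)\subset\mathrm{dom}(\beta)$ with $(\beta(y_i))$ having an accumulation point in $Y$ there is a subsequence $(v_i)\subset\mathrm{dom}(\alpha)$ of $(y_i)$ with $(\alpha(v_i))$ having an accumulation point in $V$; they are equivalent, $\equiv$, if each covers the other. Completion: for $Q\subset\mathrm{EX}(M)$ let $P=\{(\alpha,\mathrm{ran}(\alpha)):\alpha\in\mathcal{A}(M)\}$,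 $S_Q=P\cup Q$, $N_{(\alpha,U)}=\mathrm{ran}(\alpha)\cup\partial_U\mathrm{ran}(\alpha)$ with subspace topology of $\mathbb{R}^n$, $N_Q=\bigsqcup_{(\alpha,U)\in S_Q}N_{(\alpha,U)}$ with disjoint-union topology. Identify $x\in N_{(\alpha,U)}$ with $y\in N_{(\beta,X)}$ iff either $x\in\mathrm{ran}(\alpha)$, $y\in\mathrm{ran}(\beta)$, $\beta\circ\alpha^{-1}(x)=y$, or $x\in\partial_U\mathrm{ran}(\alpha)$, $y\in\partial_X\mathrm{ran}(\beta)$, $(\alpha,U,\{x\})\equiv(\beta,X,\{y\})$. $Q(M)$ is the quotient space with the quotient topology and $q:N_Q\to Q(M)$ the quotient map. *)

theory Defs
  imports "HOL-Analysis.Analysis"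
begin

definition has_partial :: "(real^'n \<Rightarrow> real^'m) \<Rightarrow> 'n \<Rightarrow> real^'n \<Rightarrow> real^'m \<Rightarrow> bool" where
  "has_partial f i x d \<longleftrightarrow> ((\<lambda>t. f (x + t *\<^sub>R axis i 1)) has_vector_derivative d) (at 0)"

fun Ck_on :: "nat \<Rightarrow> (real^'n) set \<Rightarrow> (real^'n \<Rightarrow> real^'m) \<Rightarrow> bool" where
  "Ck_on 0 U f = continuous_on U f"
| "Ck_on (Suc k) U f = (continuous_on U f \<and>
      (\<forall>i. \<exists>D. (\<forall>x\<in>U. has_partial f i x (D x)) \<and> Ck_on k U D))"

definition smooth_on :: "(real^'n) set \<Rightarrow> (real^'n \<Rightarrow> real^'m) \<Rightarrow> bool" where
  "smooth_on U f \<longleftrightarrow> (\<forall>k. Ck_on k U f)"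

text \<open>A chart is a pair (domain, map); the map is normalised to be undefined off its domain.\<close>
type_synonym ('a, 'n) chart = "'a set \<times> ('a \<Rightarrow> real^'n)"

definition cdom :: "('a, 'n) chart \<Rightarrow> 'a set" where "cdom c = fst c"
definition cmap :: "('a, 'n) chart \<Rightarrow> 'a \<Rightarrow> real^'n" where "cmap c = snd c"
definition cran :: "('a, 'n) chart \<Rightarrow> (real^'n) set" where "cran c = cmap c ` cdom c"

definition is_chart :: "('a::topological_space, 'n::finite) chart \<Rightarrow> bool" where
  "is_chart c \<longleftrightarrow> open (cdom c) \<and> open (cran c) \<and>
     (\<exists>g. homeomorphism (cdom c) (cran c) (cmap c) g) \<and>
     (\<forall>x. x \<notin> cdom c \<longrightarrow> cmap c x = undefined)"

definition smooth_compat :: "('a, 'n::finite) chart \<Rightarrow> ('a, 'n) chart \<Rightarrow> bool" where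
  "smooth_compat c d \<longleftrightarrow>
     smooth_on (cmap c ` (cdom c \<inter> cdom d)) (cmap d \<circ> inv_into (cdom c) (cmap c))"

definition smooth_atlas :: "('a::topological_space, 'n::finite) chart set \<Rightarrow> bool" where
  "smooth_atlas A \<longleftrightarrow> (\<forall>c\<in>A. is_chart c) \<and> (\<Union>c\<in>A. cdom c) = UNIV \<and>
     (\<forall>c\<in>A. \<forall>d\<in>A. smooth_compat c d)"

definition maximal_smooth_atlas :: "('a::topological_space, 'n::finite) chart set \<Rightarrow> bool" where
  "maximal_smooth_atlas A \<longleftrightarrow> smooth_atlas A \<and>
     (\<forall>c. is_chart c \<and> (\<forall>d\<in>A. smooth_compat c d \<and> smooth_compat d c) \<longrightarrow> c \<in> A)"

definition seq_acc :: "(nat \<Rightarrow> 'b::topological_space) \<Rightarrow> 'b \<Rightarrow> bool" where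
  "seq_acc x p \<longleftrightarrow> (\<forall>U. open U \<and> p \<in> U \<longrightarrow> infinite {i. x i \<in> U})"

definition adm_boundary :: "('a::topological_space, 'n::finite) chart \<Rightarrow> (real^'n) set" where
  "adm_boundary c = {p \<in> frontier (cran c).
     \<forall>x. (\<forall>i. x i \<in> cdom c) \<and> ((\<lambda>i. cmap c (x i)) \<longlonglongrightarrow> p) \<longrightarrow> \<not> (\<exists>y. seq_acc x y)}"

definition rel_bd :: "(real^'n) set \<Rightarrow> (real^'n) set \<Rightarrow> (real^'n) set" where
  "rel_bd U S = (top_of_set U) frontier_of S"

definition EXT :: "('a::topological_space, 'n::finite) chart set \<Rightarrow> (('a, 'n) chart \<times> (real^'n) set) set" where
  "EXT A = {(c, U). c \<in> A \<and> open U \<and> cran c \<subseteq> U \<and> rel_bd U (cran c) \<noteq> {} \<and>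
                   rel_bd U (cran c) \<subseteq> adm_boundary c}"

definition covers :: "('a::topological_space, 'n::finite) chart \<times> (real^'n) set \<times> (real^'n) set
    \<Rightarrow> ('a, 'n) chart \<times> (real^'n) set \<times> (real^'n) set \<Rightarrow> bool" where
  "covers cUV dXY \<longleftrightarrow> (case cUV of (c, U, V) \<Rightarrow> case dXY of (d, X, Y) \<Rightarrow>
     (\<forall>y. (\<forall>i. y i \<in> cdom d) \<and> (\<exists>p\<in>Y. seq_acc (\<lambda>i. cmap d (y i)) p) \<longrightarrow>
        (\<exists>r. strict_mono r \<and> (\<forall>i. y (r i) \<in> cdom c) \<and>
             (\<exists>p\<in>V. seq_acc (\<lambda>i. cmap c (y (r i))) p))))"

definition bs_equiv where
  "bs_equiv a b \<longleftrightarrow> covers a b \<and> covers b a"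

definition Ncomp :: "('a, 'n::finite) chart \<times> (real^'n) set \<Rightarrow> (real^'n) set" where
  "Ncomp e = cran (fst e) \<union> rel_bd (snd e) (cran (fst e))"

definition S_Q :: "('a::topological_space, 'n::finite) chart set \<Rightarrow> (('a, 'n) chart \<times> (real^'n) set) set
    \<Rightarrow> (('a, 'n) chart \<times> (real^'n) set) set" where
  "S_Q A Q = {(c, cran c) | c. c \<in> A} \<union> Q"

definition N_Q :: "('a::topological_space, 'n::finite) chart set \<Rightarrow> (('a, 'n) chart \<times> (real^'n) set) set
    \<Rightarrow> ((('a, 'n) chart \<times> (real^'n) set) \<times> (real^'n)) topology" where
  "N_Q A Q = sum_topology (\<lambda>e. top_of_set (Ncomp e)) (S_Q A Q)"

definition ident :: "(('a::topological_space, 'n::finite) chart \<times> (real^'n) set) \<times> (real^'n)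
    \<Rightarrow> (('a, 'n) chart \<times> (real^'n) set) \<times> (real^'n) \<Rightarrow> bool" where
  "ident a b \<longleftrightarrow> (case a of ((c, U), x) \<Rightarrow> case b of ((d, X), y) \<Rightarrow>
     (x \<in> cran c \<and> y \<in> cran d \<and> inv_into (cdom c) (cmap c) x \<in> cdom d \<and>
        cmap d (inv_into (cdom c) (cmap c) x) = y) \<or>
     (x \<in> rel_bd U (cran c) \<and> y \<in> rel_bd X (cran d) \<and>
        bs_equiv (c, U, {x}) (d, X, {y})))"

definition quotient_top :: "'a topology \<Rightarrow> ('a \<Rightarrow> 'b) \<Rightarrow> 'b topology" where
  "quotient_top X q = topology (\<lambda>U. U \<subseteq> q ` topspace X \<and> openin X {x \<in> topspace X. q x \<in> U})"

lemma istopology_quotient_top: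
  "istopology (\<lambda>U. U \<subseteq> q ` topspace X \<and> openin X {x \<in> topspace X. q x \<in> U})"
proof -
  have 1: "{x \<in> topspace X. q x \<in> S \<inter> T} = {x \<in> topspace X. q x \<in> S} \<inter> {x \<in> topspace X. q x \<in> T}" for S T
    by auto
  have 2: "{x \<in> topspace X. q x \<in> \<Union>K} = (\<Union>S\<in>K. {x \<in> topspace X. q x \<in> S})" for K
    by auto
  show ?thesis unfolding istopology_def 1 2 by blast
qed

lemma openin_quotient_top:
  "openin (quotient_top X q) U \<longleftrightarrow> U \<subseteq> q ` topspace X \<and> openin X {x \<in> topspace X. q x \<in> U}"
  by (simp add: quotient_top_def istopology_quotient_top)

definition qmap :: "('a::topological_space, 'n::finite) chart set \<Rightarrow> (('a, 'n) chart \<times> (real^'n) set) set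
    \<Rightarrow> (('a, 'n) chart \<times> (real^'n) set) \<times> (real^'n)
    \<Rightarrow> ((('a, 'n) chart \<times> (real^'n) set) \<times> (real^'n)) set" where
  "qmap A Q a = {b \<in> topspace (N_Q A Q).
     equivclp (\<lambda>u v. u \<in> topspace (N_Q A Q) \<and> v \<in> topspace (N_Q A Q) \<and> ident u v) a b}"

definition QM where
  "QM A Q = quotient_top (N_Q A Q) (qmap A Q)"

end

theory Submission
  imports Defs
begin

text \<open>Two points of one component of $N_Q$ are never identified, even through a chain of
  identifications: the identifications are contained in a relation that is transitive (chart
  points and boundary points never mix, as $\partial_U\,\mathrm{ran}(\alpha)$ is disjoint from the
  open set $\mathrm{ran}(\alpha)$) and that is the identity on each component (on chart points
  because charts are injective, on boundary points because a sequence converging to $x$ has no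
  subsequence accumulating at a different point $x'$). Hence each fibre of the quotient map meets
  every component in at most one point, so it is closed, and its complement is an open set of
  $Q(M)$ missing exactly one point.\<close>

lemma equivclp_le_reflclp:
  assumes "r \<le> R" "symp R" "transp R"
  shows "equivclp r \<le> R\<^sup>=\<^sup>="
proof (intro predicate2I)
  fix a b assume "equivclp r a b"
  then show "R\<^sup>=\<^sup>= a b"
  proof (induction rule: equivclp_induct)
    case (step y z)
    then have "R y z" using assms(1,2) by (auto dest: sympD)
    with step.IH show ?case using assms(3) by (auto dest: transpD)
  qed simp
qed

lemma closedin_sum_topology_if_slices_subsingleton:
  assumes "\<And>i. i \<in> I \<Longrightarrow> t1_space (X i)"
    and "C \<subseteq> topspace (sum_topology X I)"
    and "\<And>i x y. (i, x) \<in> C \<Longrightarrow> (i, y) \<in> C \<Longrightarrow> x = y"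
  shows "closedin (sum_topology X I) C"
  unfolding closedin_sum_topology
proof (intro conjI ballI)
  show "C \<subseteq> Sigma I (topspace \<circ> X)" using assms(2) by simp
  fix i assume "i \<in> I"
  have "{x. (i, x) \<in> C} \<subseteq> topspace (X i)" using assms(2) by auto
  moreover have "{x. (i, x) \<in> C} \<subseteq> {SOME x. (i, x) \<in> C}"
    using someI[of "\<lambda>x. (i, x) \<in> C"] assms(3) by blast
  then have "finite {x. (i, x) \<in> C}" by (rule finite_subset) simp
  ultimately show "closedin (X i) {x. (i, x) \<in> C}"
    using assms(1)[OF \<open>i \<in> I\<close>] t1_space_closedin_finite by blast
qed

lemma topspace_quotient_top: "topspace (quotient_top X q) = q ` topspace X"
proof
  show "topspace (quotient_top X q) \<subseteq> q ` topspace X"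
    using openin_topspace[of "quotient_top X q"] unfolding openin_quotient_top by blast
  have "{x \<in> topspace X. q x \<in> q ` topspace X} = topspace X" by auto
  then have "openin (quotient_top X q) (q ` topspace X)"
    unfolding openin_quotient_top by simp
  then show "q ` topspace X \<subseteq> topspace (quotient_top X q)" by (rule openin_subset)
qed

lemma t1_space_quotient_top:
  assumes "\<And>z. z \<in> topspace X \<Longrightarrow> closedin X {x \<in> topspace X. q x = q z}"
  shows "t1_space (quotient_top X q)"
  unfolding t1_space_def topspace_quotient_top
proof (intro ballI impI)
  fix p z' assume "p \<in> q ` topspace X" "z' \<in> q ` topspace X" "p \<noteq> z'"
  then obtain z where z: "z \<in> topspace X" "z' = q z" by blast
  have "{x \<in> topspace X. q x \<in> q ` topspace X - {z'}} =
      topspace X - {x \<in> topspace X. q x = q z}"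
    using z by auto
  then have "openin (quotient_top X q) (q ` topspace X - {z'})"
    unfolding openin_quotient_top using assms[OF z(1)] by (auto simp: closedin_def)
  then show "\<exists>U. openin (quotient_top X q) U \<and> p \<in> U \<and> z' \<notin> U"
    using \<open>p \<in> q ` topspace X\<close> \<open>p \<noteq> z'\<close> by blast
qed

lemma tendsto_imp_seq_acc:
  assumes "s \<longlonglongrightarrow> x" shows "seq_acc s x"
  unfolding seq_acc_def
proof (intro allI impI)
  fix U assume "open U \<and> x \<in> U"
  then have "\<forall>\<^sub>F n in cofinite. s n \<in> U"
    using assms topological_tendstoD cofinite_eq_sequentially by metis
  then have "finite {i. s i \<notin> U}"
    unfolding eventually_cofinite by simp
  then show "infinite {i. s i \<in> U}"
    using finite_Collect_not[of "\<lambda>i. s i \<notin> U"] by simp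
qed

lemma seq_acc_tendsto_unique:
  fixes s :: "nat \<Rightarrow> 'b::t2_space"
  assumes "s \<longlonglongrightarrow> x" "seq_acc s y" shows "x = y"
proof (rule ccontr)
  assume "x \<noteq> y"
  then obtain U V where UV: "open U" "open V" "x \<in> U" "y \<in> V" "U \<inter> V = {}"
    by (metis hausdorff)
  have "\<forall>\<^sub>F n in cofinite. s n \<notin> V"
    using topological_tendstoD[OF assms(1) UV(1,3)] UV(5)
    by (auto simp: cofinite_eq_sequentially elim: eventually_mono)
  then have "finite {i. s i \<in> V}"
    unfolding eventually_cofinite by simp
  moreover have "infinite {i. s i \<in> V}" using assms(2) UV(2,4) unfolding seq_acc_def by blast
  ultimately show False by contradiction
qed

lemma covers_trans:
  assumes "covers a b" "covers b c" shows "covers a c"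
proof -
  obtain ca Ua Va where a: "a = (ca, Ua, Va)" by (cases a) auto
  obtain cb Ub Vb where b: "b = (cb, Ub, Vb)" by (cases b) auto
  obtain cc Uc Vc where c: "c = (cc, Uc, Vc)" by (cases c) auto
  show ?thesis unfolding a c covers_def prod.case
  proof (intro allI impI)
    fix y assume "(\<forall>i. y i \<in> cdom cc) \<and> (\<exists>p\<in>Vc. seq_acc (\<lambda>i. cmap cc (y i)) p)"
    with assms(2) obtain r where r: "strict_mono r" "\<forall>i. y (r i) \<in> cdom cb"
      "\<exists>p\<in>Vb. seq_acc (\<lambda>i. cmap cb (y (r i))) p"
      unfolding b c covers_def prod.case by blast
    with assms(1) obtain r' where r': "strict_mono r'" "\<forall>i. y (r (r' i)) \<in> cdom ca"
      "\<exists>p\<in>Va. seq_acc (\<lambda>i. cmap ca (y (r (r' i)))) p"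
      unfolding a b covers_def prod.case by (elim allE[of _ "y \<circ> r"]) auto
    show "\<exists>r. strict_mono r \<and> (\<forall>i. y (r i) \<in> cdom ca) \<and>
        (\<exists>p\<in>Va. seq_acc (\<lambda>i. cmap ca (y (r i))) p)"
      using r r' by (intro exI[of _ "r \<circ> r'"]) (simp add: strict_mono_o)
  qed
qed

lemma bs_equiv_sym: "bs_equiv a b \<Longrightarrow> bs_equiv b a"
  unfolding bs_equiv_def by blast

lemma bs_equiv_trans: "bs_equiv a b \<Longrightarrow> bs_equiv b c \<Longrightarrow> bs_equiv a c"
  unfolding bs_equiv_def using covers_trans by blast

lemma covers_singleton_eq:
  assumes "covers (c, U, {x'}) (c, X, {x})" "x \<in> closure (cran c)"
  shows "x = x'"
proof -
  obtain s where s: "\<And>n. s n \<in> cran c" "s \<longlonglongrightarrow> x"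
    using assms(2) unfolding closure_sequential by blast
  define y where "y n = inv_into (cdom c) (cmap c) (s n)" for n
  have y: "\<And>n. y n \<in> cdom c" "\<And>n. cmap c (y n) = s n"
    using s(1) unfolding y_def cran_def by (auto intro: inv_into_into f_inv_into_f)
  have "seq_acc (\<lambda>i. cmap c (y i)) x" using tendsto_imp_seq_acc s(2) by (simp add: y(2))
  then obtain r where r: "strict_mono r" "seq_acc (\<lambda>i. s (r i)) x'"
    using assms(1) y unfolding covers_def prod.case by (elim allE[of _ y]) auto
  have "(\<lambda>i. s (r i)) \<longlonglongrightarrow> x" using LIMSEQ_subseq_LIMSEQ[OF s(2) r(1)] by (simp add: o_def)
  then show ?thesis using r(2) seq_acc_tendsto_unique by blast
qed

lemma is_chart_inj_on: "is_chart c \<Longrightarrow> inj_on (cmap c) (cdom c)"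
  unfolding is_chart_def homeomorphism_def by (metis inj_on_inverseI)

lemma rel_bd_subset_closure: "rel_bd U S \<subseteq> closure S"
proof -
  have "rel_bd U S \<subseteq> top_of_set U closure_of S" unfolding rel_bd_def frontier_of_def by blast
  also have "\<dots> \<subseteq> closure S" by (simp add: closure_of_subtopology closure_mono le_infI2)
  finally show ?thesis .
qed

lemma rel_bd_Int_open_eq_empty:
  assumes "open S" "S \<subseteq> U" shows "rel_bd U S \<inter> S = {}"
proof -
  have "openin (top_of_set U) S"
    using openin_open_Int[OF assms(1), of U] assms(2) by (simp add: Int_absorb1)
  then show ?thesis unfolding rel_bd_def frontier_of_def by (auto simp: interior_of_openin)
qed

text \<open>A transitive enlargement of \<open>ident\<close>: chart points are compared through the point of
  $M$ they represent.\<close>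
definition same_point :: "(('a::topological_space, 'n::finite) chart \<times> (real^'n) set) \<times> (real^'n)
    \<Rightarrow> (('a, 'n) chart \<times> (real^'n) set) \<times> (real^'n) \<Rightarrow> bool" where
  "same_point a b \<longleftrightarrow> (case a of ((c, U), x) \<Rightarrow> case b of ((d, X), y) \<Rightarrow>
     (x \<in> cran c \<and> y \<in> cran d \<and> inv_into (cdom c) (cmap c) x = inv_into (cdom d) (cmap d) y) \<or>
     (x \<in> rel_bd U (cran c) \<and> y \<in> rel_bd X (cran d) \<and> bs_equiv (c, U, {x}) (d, X, {y})))"

lemma same_point_sym: "same_point a b \<Longrightarrow> same_point b a"
  unfolding same_point_def by (auto split: prod.splits dest: bs_equiv_sym)

locale completion =
  fixes A :: "('a::topological_space, 'n::finite) chart set"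
    and Q :: "(('a, 'n) chart \<times> (real^'n) set) set"
  assumes charts: "\<And>c. c \<in> A \<Longrightarrow> is_chart c"
    and Q_EXT: "Q \<subseteq> EXT A"
begin

lemma topspace_N_Q: "topspace (N_Q A Q) = Sigma (S_Q A Q) Ncomp"
  unfolding N_Q_def by (simp add: o_def)

lemma S_Q_memD:
  assumes "e \<in> S_Q A Q" shows "is_chart (fst e)" and "cran (fst e) \<subseteq> snd e"
proof -
  have "(\<exists>c. e = (c, cran c) \<and> c \<in> A) \<or> e \<in> EXT A"
    using assms Q_EXT unfolding S_Q_def by blast
  then show "is_chart (fst e)" and "cran (fst e) \<subseteq> snd e"
    using charts unfolding EXT_def by auto
qed

lemma component_rel_bd_Int_cran:
  assumes "e \<in> S_Q A Q" shows "rel_bd (snd e) (cran (fst e)) \<inter> cran (fst e) = {}"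
  using S_Q_memD[OF assms] by (simp add: rel_bd_Int_open_eq_empty is_chart_def)

lemma ident_imp_same_point:
  assumes "u \<in> topspace (N_Q A Q)" "v \<in> topspace (N_Q A Q)" "ident u v"
  shows "same_point u v"
proof -
  obtain c U x d X y where uv: "u = ((c, U), x)" "v = ((d, X), y)" by (metis prod.collapse)
  have "is_chart d"
    using assms(2) S_Q_memD(1)[of "(d, X)"] by (auto simp: uv topspace_N_Q)
  then have "inv_into (cdom d) (cmap d) (cmap d z) = z" if "z \<in> cdom d" for z
    using that by (simp add: is_chart_inj_on)
  then show ?thesis using assms(3) unfolding uv ident_def same_point_def by auto
qed

lemma same_point_trans:
  assumes "same_point u v" "same_point v w" "v \<in> topspace (N_Q A Q)"
  shows "same_point u w"
proof -
  obtain e y where v: "v = (e, y)" by fastforce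
  have "y \<notin> rel_bd (snd e) (cran (fst e)) \<inter> cran (fst e)"
    using component_rel_bd_Int_cran assms(3) by (auto simp: v topspace_N_Q)
  then show ?thesis using assms(1,2) unfolding v same_point_def
    by (auto split: prod.splits dest: bs_equiv_trans)
qed

lemma same_point_same_component:
  assumes "(e, x) \<in> topspace (N_Q A Q)" "same_point (e, x) (e, y)"
  shows "x = y"
proof -
  obtain c U where e: "e = (c, U)" by fastforce
  show ?thesis using assms(2) unfolding e same_point_def prod.case
  proof (elim disjE conjE)
    assume "x \<in> cran c" "y \<in> cran c" "inv_into (cdom c) (cmap c) x = inv_into (cdom c) (cmap c) y"
    then show "x = y" unfolding cran_def by (metis f_inv_into_f)
  next
    assume "x \<in> rel_bd U (cran c)" "bs_equiv (c, U, {x}) (c, U, {y})"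
    then show "x = y" using rel_bd_subset_closure covers_singleton_eq
      unfolding bs_equiv_def by blast
  qed
qed

lemma qmap_eq_same_component:
  assumes "(e, x) \<in> topspace (N_Q A Q)" "(e, y) \<in> topspace (N_Q A Q)"
    and "qmap A Q (e, x) = qmap A Q (e, y)"
  shows "x = y"
proof -
  define r where "r = (\<lambda>u v. u \<in> topspace (N_Q A Q) \<and> v \<in> topspace (N_Q A Q) \<and> ident u v)"
  define R where "R = (\<lambda>u v. u \<in> topspace (N_Q A Q) \<and> v \<in> topspace (N_Q A Q) \<and> same_point u v)"
  have "r \<le> R" unfolding r_def R_def using ident_imp_same_point by blast
  moreover have "symp R" unfolding R_def by (auto intro: sympI same_point_sym)
  moreover have "transp R" unfolding R_def by (auto intro: transpI same_point_trans)
  moreover have "(e, y) \<in> qmap A Q (e, x)"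
    using assms(2,3) by (simp add: qmap_def)
  then have "equivclp r (e, x) (e, y)"
    unfolding qmap_def r_def by simp
  ultimately have "(e, x) = (e, y) \<or> same_point (e, x) (e, y)"
    unfolding R_def by (auto dest: equivclp_le_reflclp)
  then show ?thesis using same_point_same_component[OF assms(1)] by blast
qed

lemma closedin_qmap_fibre: "closedin (N_Q A Q) {x \<in> topspace (N_Q A Q). qmap A Q x = qmap A Q z}"
  unfolding N_Q_def
  by (intro closedin_sum_topology_if_slices_subsingleton)
    (auto simp: t1_space_subtopology t1_space_euclidean intro: qmap_eq_same_component[unfolded N_Q_def])

end

theorem mainTheorem14:
  fixes A :: "('a::{t2_space, second_countable_topology}, 'n::finite) chart set"
    and Q :: "(('a, 'n) chart \<times> (real^'n) set) set"
  assumes "maximal_smooth_atlas A"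
    and "Q \<subseteq> EXT A"
  shows "t1_space (QM A Q)"
proof -
  interpret completion A Q
    using assms unfolding completion_def maximal_smooth_atlas_def smooth_atlas_def by blast
  show ?thesis unfolding QM_def by (intro t1_space_quotient_top closedin_qmap_fibre)
qed

end
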